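(* Let $\sigma_5=e^{-\pi i/9}\frac{\sqrt5+i\sqrt3}{2}$. (i) The group $\Gamma=\mathcal{S}(2,\sigma_5)$ is generated by $\mathrm{Stab}_\Gamma(m(P^5))\cup\mathrm{Stab}_\Gamma(m(B))$, where $P=R_1J$ and $B=R_2R_3^{-1}R_2^{-1}R_1R_2R_3R_2^{-1}$. (ii) The group $\Gamma=\mathcal{S}(4,\sigma_5)$ is generated by $\mathrm{Stab}_\Gamma(m(R_1))\cup\mathrm{Stab}_\Gamma(m(A))$, where $A$ can be taken to be any one of $(R_1R_2R_3R_2^{-1})^5$, $(R_1R_3^{-1}R_2R_3)^5$, $(R_1R_2^{-1}R_1^{-1}R_3R_1R_2)^5$, $(R_1R_3R_1R_2R_1^{-1}R_3^{-1})^5$.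
   Context: Let $p\ge2$ be an integer and $\tau\in\mathbb{C}$. Set $u=e^{2\pi i/(3p)}$, $\alpha=2-u^3-\bar u^3$, $\beta=(\bar u^2-u)\tau$ and $H=\begin{pmatrix}\alpha&\beta&\bar\beta\\ \bar\beta&\alpha&\beta\\ \beta&\bar\beta&\alpha\end{pmatrix}$, a Hermitian matrix (of signature $(2,1)$ for the parameters considered) defining the form $\langle X,Y\rangle=Y^*HX$. Let $R_1=\begin{pmatrix}u^2&\tau&-u\bar\tau\\0&\bar u&0\\0&0&\bar u\end{pmatrix}$, $J=\begin{pmatrix}0&0&1\\1&0&0\\0&1&0\end{pmatrix}$, $R_2=JR_1J^{-1}$, $R_3=JR_2J^{-1}$. The group $\mathcal{S}(p,\tau)$ is the subgroup of $U(H)$ generated by $R_1$ and $J$, acting on $H^2_{\mathbb{C}}=\{[X]:\langle X,X\rangle<0\}$ through its image in $PU(H)$; all statements refer to this image. The elements $P^5$, $B$, $R_1$ and the listed $A$ are complex reflections (non-identity elements fixing pointwise a complex line) in the relevant groups; for such an element $A$, $m(A)$ denotes its mirror (fixed complex line), and $\mathrm{Stab}_\Gamma(m)$ is the setwise stabilizer of $m$ in $\Gamma$. *)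

theory Defs
  imports "HOL-Analysis.Analysis"
begin

type_synonym cmat = "complex^3^3"
type_synonym cvec = "complex^3"

definition uu :: "nat \<Rightarrow> complex" where
  "uu p = exp (2 * pi * \<i> / (3 * of_nat p))"

definition alphaS :: "nat \<Rightarrow> complex" where
  "alphaS p = 2 - (uu p)^3 - (cnj (uu p))^3"

definition betaS :: "nat \<Rightarrow> complex \<Rightarrow> complex" where
  "betaS p \<tau> = ((cnj (uu p))^2 - uu p) * \<tau>"

definition Hmat :: "nat \<Rightarrow> complex \<Rightarrow> cmat" where
  "Hmat p \<tau> = (let a = alphaS p; b = betaS p \<tau> in
     vector [vector [a, b, cnj b], vector [cnj b, a, b], vector [b, cnj b, a]])"

definition hform :: "cmat \<Rightarrow> cvec \<Rightarrow> cvec \<Rightarrow> complex" where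
  "hform H X Y = (\<Sum>i\<in>UNIV. \<Sum>j\<in>UNIV. cnj (Y $ i) * (H $ i $ j) * (X $ j))"

definition R1m :: "nat \<Rightarrow> complex \<Rightarrow> cmat" where
  "R1m p \<tau> = (let u = uu p in
     vector [vector [u^2, \<tau>, - u * cnj \<tau>], vector [0, cnj u, 0], vector [0, 0, cnj u]])"

definition Jm :: cmat where
  "Jm = vector [vector [0, 0, 1], vector [1, 0, 0], vector [0, 1, 0]]"

definition R2m :: "nat \<Rightarrow> complex \<Rightarrow> cmat" where
  "R2m p \<tau> = Jm ** R1m p \<tau> ** matrix_inv Jm"

definition R3m :: "nat \<Rightarrow> complex \<Rightarrow> cmat" where
  "R3m p \<tau> = Jm ** R2m p \<tau> ** matrix_inv Jm"

definition mpow :: "cmat \<Rightarrow> nat \<Rightarrow> cmat" where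
  "mpow M n = (((**) M) ^^ n) (mat 1)"

inductive_set gen_grp :: "cmat set \<Rightarrow> cmat set" for S where
  gen_one: "mat 1 \<in> gen_grp S"
| gen_mult: "g \<in> S \<Longrightarrow> h \<in> gen_grp S \<Longrightarrow> g ** h \<in> gen_grp S"
| gen_inv: "g \<in> S \<Longrightarrow> h \<in> gen_grp S \<Longrightarrow> matrix_inv g ** h \<in> gen_grp S"

text \<open>The group S(p,tau) (as a matrix group; it acts on complex hyperbolic space
  through its image in PU(H)).\<close>
definition Sgrp :: "nat \<Rightarrow> complex \<Rightarrow> cmat set" where
  "Sgrp p \<tau> = gen_grp {R1m p \<tau>, Jm}"

text \<open>Complex hyperbolic plane as the cone of negative vectors; a point [X] is
  represented by all its (nonzero) lifts.\<close>
definition negcone :: "cmat \<Rightarrow> cvec set" where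
  "negcone H = {X. Re (hform H X X) < 0 \<and> hform H X X \<in> \<real>}"

text \<open>Mirror of a complex reflection: its fixed point set in H^2_C, i.e. the
  negative vectors X with A X a scalar multiple of X (so [AX] = [X]).\<close>
definition mirror :: "cmat \<Rightarrow> cmat \<Rightarrow> cvec set" where
  "mirror H A = {X \<in> negcone H. \<exists>c. A *v X = c *s X}"

definition stab :: "cmat set \<Rightarrow> cvec set \<Rightarrow> cmat set" where
  "stab G m = {g \<in> G. (\<lambda>X. g *v X) ` m = m}"

definition sigma5 :: complex where
  "sigma5 = exp (- pi * \<i> / 9) * ((sqrt 5 + \<i> * sqrt 3) / 2)"

end

theory Submission
  imports Defs
begin

text \<open>
  Write \<open>sigma5 = eta * tau5\<close> with \<open>eta = exp (-pi i/9)\<close> and \<open>tau5 = golden + zeta12\<^sup>2 - 1\<close>,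
  where \<open>zeta12 = exp (pi i/6)\<close> and \<open>golden = (1 + sqrt 5)/2\<close>. Conjugation by
  \<open>diag(1, eta, cnj eta)\<close> turns \<open>R1(p, sigma5)\<close> into \<open>R1(p, tau5)\<close> and \<open>J\<close> into \<open>eta\<close> times
  a matrix over \<open>Z[zeta12, golden]\<close>. So for \<open>p = 2, 4\<close> every word in \<open>R1\<close> and \<open>J\<close> is a power of
  \<open>eta\<close> times the conjugate of a matrix over that ring, and identities between words are
  decided by exact integer arithmetic.

  An element of \<open>Gamma\<close> that commutes with a complex reflection \<open>A\<close> is an isometry mapping the
  eigenvectors of \<open>A\<close> to eigenvectors, so it stabilises the mirror of \<open>A\<close>. Hence it suffices
  to write \<open>R1\<close> and \<open>J\<close> as products of words each commuting with one of the two given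
  reflections; these factorisations are checked by evaluation.
\<close>

lemma matrix_inv_unique:
  fixes A B :: "'a::field^'n^'n"
  assumes "A ** B = mat 1"
  shows "matrix_inv A = B"
proof -
  have "B ** A = mat 1"
    using assms matrix_left_right_inverse by blast
  then have "\<exists>A'. A ** A' = mat 1 \<and> A' ** A = mat 1"
    using assms by blast
  then have "matrix_inv A ** A = mat 1"
    unfolding matrix_inv_def by (rule someI2_ex) blast
  then have "matrix_inv A ** (A ** B) = B"
    by (simp add: matrix_mul_assoc)
  with assms show ?thesis by simp
qed

lemma
  fixes A :: "'a::field^'n^'n"
  assumes "invertible A"
  shows matrix_inv_right: "A ** matrix_inv A = mat 1"
    and matrix_inv_left: "matrix_inv A ** A = mat 1"
proof -
  obtain B where "A ** B = mat 1"
    using assms invertible_right_inverse by blast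
  then show "A ** matrix_inv A = mat 1" "matrix_inv A ** A = mat 1"
    using matrix_inv_unique matrix_left_right_inverse by metis+
qed

lemma invertible_matrix_inv:
  fixes A :: "'a::field^'n^'n"
  shows "invertible A \<Longrightarrow> invertible (matrix_inv A)"
  using matrix_inv_left invertible_right_inverse by blast

lemma matrix_inv_matrix_inv:
  fixes A :: "'a::field^'n^'n"
  shows "invertible A \<Longrightarrow> matrix_inv (matrix_inv A) = A"
  using matrix_inv_left matrix_inv_unique by blast

lemma matrix_inv_mult:
  fixes A B :: "'a::field^'n^'n"
  assumes "invertible A" "invertible B"
  shows "matrix_inv (A ** B) = matrix_inv B ** matrix_inv A"
proof (rule matrix_inv_unique)
  have "A ** B ** (matrix_inv B ** matrix_inv A) = A ** (B ** matrix_inv B) ** matrix_inv A"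
    by (simp add: matrix_mul_assoc)
  then show "A ** B ** (matrix_inv B ** matrix_inv A) = mat 1"
    using assms by (simp add: matrix_inv_right)
qed

lemma gen_grp_base: "g \<in> S \<Longrightarrow> g \<in> gen_grp S"
  using gen_mult[OF _ gen_one] by simp

lemma gen_grp_mult: "x \<in> gen_grp S \<Longrightarrow> y \<in> gen_grp S \<Longrightarrow> x ** y \<in> gen_grp S"
  by (induction x rule: gen_grp.induct) (auto simp flip: matrix_mul_assoc intro: gen_mult gen_inv)

lemma gen_grp_matrix_inv:
  assumes "\<forall>g\<in>S. invertible g" and "x \<in> gen_grp S"
  shows "invertible x \<and> matrix_inv x \<in> gen_grp S"
  using assms(2)
proof (induction x rule: gen_grp.induct)
  case gen_one
  have "matrix_inv (mat 1 :: cmat) = mat 1"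
    by (rule matrix_inv_unique) simp
  then show ?case
    using invertible_right_inverse gen_grp.gen_one by fastforce
next
  case (gen_mult g h)
  then have "invertible g" "matrix_inv g \<in> gen_grp S"
    using assms(1) gen_inv[OF _ gen_one] by auto
  with gen_mult show ?case
    by (simp add: invertible_mult matrix_inv_mult gen_grp_mult)
next
  case (gen_inv g h)
  then have "invertible g" "g \<in> gen_grp S"
    using assms(1) gen_grp_base by auto
  with gen_inv show ?case
    by (simp add: invertible_mult invertible_matrix_inv matrix_inv_mult matrix_inv_matrix_inv
        gen_grp_mult)
qed

lemma gen_grp_subset:
  assumes "S \<subseteq> gen_grp T" and "\<forall>g\<in>T. invertible g"
  shows "gen_grp S \<subseteq> gen_grp T"
proof
  fix x assume "x \<in> gen_grp S"
  then show "x \<in> gen_grp T"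
    by (induction x rule: gen_grp.induct)
      (use assms gen_grp_mult gen_grp_matrix_inv in \<open>auto intro: gen_one\<close>)
qed

section \<open>Isometries and stabilisers of mirrors\<close>

definition isometry :: "cmat \<Rightarrow> cmat \<Rightarrow> bool" where
  "isometry H g \<longleftrightarrow> (\<forall>X Y. hform H (g *v X) (g *v Y) = hform H X Y)"

definition conj_transpose :: "cmat \<Rightarrow> cmat" where
  "conj_transpose g = (\<chi> i j. cnj (g $ j $ i))"

lemma hform_matrix_vector_mult: "hform H (g *v X) (g *v Y) = hform (conj_transpose g ** H ** g) X Y"
  by (simp add: hform_def matrix_vector_mult_def matrix_matrix_mult_def conj_transpose_def sum_3
      algebra_simps)

lemma isometryI: "conj_transpose g ** H ** g = H \<Longrightarrow> isometry H g"
  by (simp add: isometry_def hform_matrix_vector_mult)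

lemma isometry_mult: "isometry H g \<Longrightarrow> isometry H h \<Longrightarrow> isometry H (g ** h)"
  by (simp add: isometry_def flip: matrix_vector_mul_assoc)

lemma isometry_matrix_inv: "isometry H g \<Longrightarrow> invertible g \<Longrightarrow> isometry H (matrix_inv g)"
  unfolding isometry_def
  by (metis matrix_inv_right matrix_vector_mul_assoc matrix_vector_mul_lid)

lemma uu_mult_cnj: "uu p * cnj (uu p) = 1"
  by (simp add: uu_def exp_cnj flip: exp_add)

lemma isometry_R1m: "isometry (Hmat p \<tau>) (R1m p \<tau>)"
proof (rule isometryI)
  show "conj_transpose (R1m p \<tau>) ** Hmat p \<tau> ** R1m p \<tau> = Hmat p \<tau>"
    using uu_mult_cnj[of p]
    by (simp add: Let_def R1m_def Hmat_def alphaS_def betaS_def vec_eq_iff forall_3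
        matrix_matrix_mult_def sum_3 conj_transpose_def) algebra
qed

lemma isometry_Jm: "isometry (Hmat p \<tau>) Jm"
  by (rule isometryI)
    (simp add: Let_def Jm_def Hmat_def vec_eq_iff forall_3 matrix_matrix_mult_def sum_3
      conj_transpose_def)

lemma invertible_R1m: "invertible (R1m p \<tau>)"
proof -
  have "det (R1m p \<tau>) = (uu p * cnj (uu p))^2"
    by (simp add: R1m_def Let_def det_3 power2_eq_square)
  then show ?thesis
    by (simp add: invertible_det_nz uu_mult_cnj)
qed

lemma invertible_Jm: "invertible Jm"
  by (simp add: invertible_det_nz det_3 Jm_def)

lemma Sgrp_generators: "\<forall>g\<in>{R1m p \<tau>, Jm}. invertible g \<and> isometry (Hmat p \<tau>) g"
  using invertible_R1m invertible_Jm isometry_R1m isometry_Jm by blast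

lemma
  assumes "g \<in> Sgrp p \<tau>"
  shows Sgrp_invertible: "invertible g"
    and Sgrp_matrix_inv: "matrix_inv g \<in> Sgrp p \<tau>"
  using gen_grp_matrix_inv Sgrp_generators assms unfolding Sgrp_def by blast+

lemma Sgrp_isometry: "g \<in> Sgrp p \<tau> \<Longrightarrow> isometry (Hmat p \<tau>) g"
  unfolding Sgrp_def
proof (induction g rule: gen_grp.induct)
  case gen_one
  show ?case by (simp add: isometry_def)
next
  case (gen_mult g h)
  then show ?case using Sgrp_generators isometry_mult by blast
next
  case (gen_inv g h)
  then show ?case using Sgrp_generators isometry_mult isometry_matrix_inv by blast
qed

lemma mirror_commuting_isometry:
  assumes "isometry H g" and "g ** A = A ** g" and "X \<in> mirror H A"
  shows "g *v X \<in> mirror H A"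
proof -
  obtain c where c: "A *v X = c *s X" and "X \<in> negcone H"
    using assms(3) unfolding mirror_def by blast
  then have "g *v X \<in> negcone H"
    using assms(1) by (simp add: negcone_def isometry_def)
  moreover have "A *v (g *v X) = c *s (g *v X)"
    using assms(2) c by (metis matrix_vector_mul_assoc vector_scalar_commute)
  ultimately show ?thesis
    unfolding mirror_def by blast
qed

lemma commuting_in_stab_mirror:
  assumes g: "g \<in> Sgrp p \<tau>" and comm: "g ** A = A ** g"
  shows "g \<in> stab (Sgrp p \<tau>) (mirror (Hmat p \<tau>) A)"
proof -
  let ?g' = "matrix_inv g" and ?m = "mirror (Hmat p \<tau>) A"
  have inv: "g ** ?g' = mat 1" "?g' ** g = mat 1"
    using Sgrp_invertible[OF g] matrix_inv_right matrix_inv_left by blast+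
  have "?g' ** A = ?g' ** A ** (g ** ?g')"
    using inv by simp
  also have "\<dots> = ?g' ** (g ** A) ** ?g'"
    using comm by (simp add: matrix_mul_assoc)
  also have "\<dots> = A ** ?g'"
    using inv by (simp add: matrix_mul_assoc)
  finally have comm': "?g' ** A = A ** ?g'" .
  have "(\<lambda>X. g *v X) ` ?m \<subseteq> ?m"
    using mirror_commuting_isometry[OF Sgrp_isometry[OF g] comm] by auto
  moreover have "?m \<subseteq> (\<lambda>X. g *v X) ` ?m"
  proof
    fix X assume "X \<in> ?m"
    then have "?g' *v X \<in> ?m"
      by (rule mirror_commuting_isometry[OF Sgrp_isometry[OF Sgrp_matrix_inv[OF g]] comm'])
    moreover have "X = g *v (?g' *v X)"
      using inv by (simp add: matrix_vector_mul_assoc)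
    ultimately show "X \<in> (\<lambda>X. g *v X) ` ?m" by (rule rev_image_eqI)
  qed
  ultimately show ?thesis
    using g unfolding stab_def by blast
qed

lemma gen_grp_eq_Sgrp:
  assumes "T \<subseteq> Sgrp p \<tau>" and "R1m p \<tau> \<in> gen_grp T" and "Jm \<in> gen_grp T"
  shows "gen_grp T = Sgrp p \<tau>"
proof
  show "gen_grp T \<subseteq> Sgrp p \<tau>"
    unfolding Sgrp_def
    by (rule gen_grp_subset) (use assms(1) Sgrp_generators in \<open>auto simp: Sgrp_def\<close>)
  have "\<forall>g\<in>T. invertible g"
    using assms(1) Sgrp_invertible by blast
  then show "Sgrp p \<tau> \<subseteq> gen_grp T"
    unfolding Sgrp_def by (rule gen_grp_subset[rotated]) (use assms(2,3) in auto)
qed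

section \<open>Words in the generators\<close>

datatype letter = LR1 | LR2 | LR3 | LJ | Inv letter

type_synonym word = "letter list"

fun letter_mat :: "nat \<Rightarrow> complex \<Rightarrow> letter \<Rightarrow> cmat" where
  "letter_mat p \<tau> LR1 = R1m p \<tau>"
| "letter_mat p \<tau> LR2 = R2m p \<tau>"
| "letter_mat p \<tau> LR3 = R3m p \<tau>"
| "letter_mat p \<tau> LJ = Jm"
| "letter_mat p \<tau> (Inv l) = matrix_inv (letter_mat p \<tau> l)"

definition word_mat :: "nat \<Rightarrow> complex \<Rightarrow> word \<Rightarrow> cmat" where
  "word_mat p \<tau> w = foldr (\<lambda>l M. letter_mat p \<tau> l ** M) w (mat 1)"

lemma word_mat_Nil [simp]: "word_mat p \<tau> [] = mat 1"
  and word_mat_Cons [simp]: "word_mat p \<tau> (l # w) = letter_mat p \<tau> l ** word_mat p \<tau> w"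
  by (simp_all add: word_mat_def)

lemma word_mat_append: "word_mat p \<tau> (v @ w) = word_mat p \<tau> v ** word_mat p \<tau> w"
  by (induction v) (simp_all add: matrix_mul_assoc)

lemma letter_mat_in_Sgrp: "letter_mat p \<tau> l \<in> Sgrp p \<tau>"
proof -
  have R1: "R1m p \<tau> \<in> Sgrp p \<tau>" and J: "Jm \<in> Sgrp p \<tau>"
    by (simp_all add: Sgrp_def gen_grp_base)
  have conj: "Jm ** g ** matrix_inv Jm \<in> Sgrp p \<tau>" if "g \<in> Sgrp p \<tau>" for g
    using that J Sgrp_matrix_inv[OF J] by (simp add: Sgrp_def gen_grp_mult)
  show ?thesis
    by (induction l)
      (use R1 J conj[OF R1] conj[OF conj[OF R1]] Sgrp_matrix_inv in \<open>simp_all add: R2m_def R3m_def\<close>)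
qed

lemma word_mat_in_Sgrp: "word_mat p \<tau> w \<in> Sgrp p \<tau>"
  by (induction w) (simp_all add: Sgrp_def gen_one gen_grp_mult letter_mat_in_Sgrp[unfolded Sgrp_def])

fun letter_inv :: "letter \<Rightarrow> letter" where
  "letter_inv (Inv l) = l"
| "letter_inv l = Inv l"

definition word_inv :: "word \<Rightarrow> word" where
  "word_inv w = rev (map letter_inv w)"

definition power_word :: "nat \<Rightarrow> word \<Rightarrow> word" where
  "power_word n w = concat (replicate n w)"

lemma word_mat_power_word: "word_mat p \<tau> (power_word n w) = mpow (word_mat p \<tau> w) n"
  by (induction n) (simp_all add: power_word_def mpow_def word_mat_append)

definition stab_mirrors_gen :: "nat \<Rightarrow> complex \<Rightarrow> word \<Rightarrow> word \<Rightarrow> cmat set" where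
  "stab_mirrors_gen p \<tau> a1 a2 =
     gen_grp (stab (Sgrp p \<tau>) (mirror (Hmat p \<tau>) (word_mat p \<tau> a1)) \<union>
              stab (Sgrp p \<tau>) (mirror (Hmat p \<tau>) (word_mat p \<tau> a2)))"

lemma factors_in_stab_mirrors_gen:
  assumes "\<forall>(f, a) \<in> set fs. a \<in> {a1, a2} \<and>
             word_mat p \<tau> f ** word_mat p \<tau> a = word_mat p \<tau> a ** word_mat p \<tau> f"
  shows "word_mat p \<tau> (concat (map fst fs)) \<in> stab_mirrors_gen p \<tau> a1 a2"
  using assms
proof (induction fs)
  case Nil
  show ?case by (simp add: stab_mirrors_gen_def gen_one)
next
  case (Cons fa fs)
  obtain f a where fa: "fa = (f, a)" by fastforce
  then have "word_mat p \<tau> f \<in> stab (Sgrp p \<tau>) (mirror (Hmat p \<tau>) (word_mat p \<tau> a1)) \<union>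
                              stab (Sgrp p \<tau>) (mirror (Hmat p \<tau>) (word_mat p \<tau> a2))"
    using Cons.prems commuting_in_stab_mirror[OF word_mat_in_Sgrp] by auto
  with Cons show ?case
    by (simp add: stab_mirrors_gen_def fa word_mat_append gen_grp_base gen_grp_mult)
qed

lemma stab_mirrors_gen_eq_Sgrp:
  assumes "\<forall>(f, a) \<in> set (fsR @ fsJ). a \<in> {a1, a2} \<and>
             word_mat p \<tau> f ** word_mat p \<tau> a = word_mat p \<tau> a ** word_mat p \<tau> f"
    and "word_mat p \<tau> (concat (map fst fsR)) = R1m p \<tau>"
    and "word_mat p \<tau> (concat (map fst fsJ)) = Jm"
  shows "stab_mirrors_gen p \<tau> a1 a2 = Sgrp p \<tau>"
proof -
  have "R1m p \<tau> \<in> stab_mirrors_gen p \<tau> a1 a2" and "Jm \<in> stab_mirrors_gen p \<tau> a1 a2"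
    using factors_in_stab_mirrors_gen[of fsR a1 a2 p \<tau>] factors_in_stab_mirrors_gen[of fsJ a1 a2 p \<tau>]
      assms
    by (simp_all add: ball_Un)
  then show ?thesis
    unfolding stab_mirrors_gen_def by (intro gen_grp_eq_Sgrp) (auto simp: stab_def)
qed

section \<open>Exact arithmetic in Z[zeta12, golden]\<close>

definition zeta12 :: complex where
  "zeta12 = uu 4"

definition golden :: complex where
  "golden = (1 + sqrt 5) / 2"

definition eta :: complex where
  "eta = exp (- pi * \<i> / 9)"

definition tau5 :: complex where
  "tau5 = (sqrt 5 + \<i> * sqrt 3) / 2"

lemma uu2_eq: "uu 2 = zeta12^2"
  by (simp add: zeta12_def uu_def power2_eq_square field_simps flip: exp_add)

lemma zeta12_sq: "zeta12^2 = Complex (1/2) (sqrt 3 / 2)"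
proof -
  have "uu 2 = cis (pi / 3)"
    by (simp add: uu_def cis_conv_exp field_simps)
  then show ?thesis
    by (simp add: complex_eq_iff cos_60 sin_60 flip: uu2_eq)
qed

lemma zeta12_pow4: "zeta12^4 = zeta12^2 - 1"
proof -
  have "zeta12^4 = (zeta12^2)^2"
    by simp
  also have "\<dots> = zeta12^2 - 1"
    unfolding zeta12_sq by (simp add: complex_eq_iff power2_eq_square field_simps)
  finally show ?thesis .
qed

lemma cnj_zeta12_sq: "cnj (zeta12^2) = 1 - zeta12^2"
  by (simp add: zeta12_sq complex_eq_iff)

lemma cnj_zeta12: "cnj zeta12 = zeta12 - zeta12^3"
proof -
  have "zeta12 * cnj zeta12 = 1"
    using uu_mult_cnj by (simp add: zeta12_def)
  have "cnj zeta12 = cnj zeta12 * (zeta12^2 - zeta12^4)"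
    using zeta12_pow4 by simp
  also have "\<dots> = (zeta12 * cnj zeta12) * (zeta12 - zeta12^3)"
    by (simp add: algebra_simps power_numeral_reduce)
  finally show ?thesis
    using \<open>zeta12 * cnj zeta12 = 1\<close> by simp
qed

lemma golden_sq: "golden^2 = golden + 1"
proof -
  have "((1 + sqrt 5) / 2)^2 = (1 + sqrt 5) / 2 + (1::real)"
    by (simp add: power2_eq_square field_simps)
  then have "of_real (((1 + sqrt 5) / 2)^2) = (of_real ((1 + sqrt 5) / 2 + 1) :: complex)"
    by (simp only:)
  then show ?thesis
    by (simp add: golden_def)
qed

lemma eta_mult_cnj: "eta * cnj eta = 1"
  by (simp add: eta_def exp_cnj flip: exp_add)

lemma eta_cube: "eta^3 = cnj (zeta12^2)"
  by (simp add: eta_def zeta12_def uu_def exp_cnj field_simps flip: exp_of_nat_mult)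

lemma sigma5_eq: "sigma5 = eta * tau5"
  by (simp add: sigma5_def eta_def tau5_def)

lemma tau5_eq: "tau5 = golden + zeta12^2 - 1"
  by (simp add: tau5_def golden_def zeta12_sq complex_eq_iff field_simps)

lemma cnj_tau5_eq: "cnj tau5 = golden - zeta12^2"
  by (simp add: tau5_def golden_def zeta12_sq complex_eq_iff field_simps)

datatype cyc = Cyc int int int int

fun cyc_val :: "cyc \<Rightarrow> complex" where
  "cyc_val (Cyc a0 a1 a2 a3) = a0 + a1 * zeta12 + a2 * zeta12^2 + a3 * zeta12^3"

fun cyc_add :: "cyc \<Rightarrow> cyc \<Rightarrow> cyc" where
  "cyc_add (Cyc a0 a1 a2 a3) (Cyc b0 b1 b2 b3) = Cyc (a0 + b0) (a1 + b1) (a2 + b2) (a3 + b3)"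

text \<open>Reduction of the product modulo \<open>zeta12^4 = zeta12^2 - 1\<close>.\<close>

fun cyc_mul :: "cyc \<Rightarrow> cyc \<Rightarrow> cyc" where
  "cyc_mul (Cyc a0 a1 a2 a3) (Cyc b0 b1 b2 b3) =
     Cyc (a0*b0 - a1*b3 - a2*b2 - a3*b1 - a3*b3)
         (a0*b1 + a1*b0 - a2*b3 - a3*b2)
         (a0*b2 + a1*b1 + a2*b0 + a1*b3 + a2*b2 + a3*b1)
         (a0*b3 + a1*b2 + a2*b1 + a3*b0 + a2*b3 + a3*b2)"

lemma cyc_val_add: "cyc_val (cyc_add x y) = cyc_val x + cyc_val y"
  by (cases x; cases y) (simp add: algebra_simps)

lemma cyc_val_mul: "cyc_val (cyc_mul x y) = cyc_val x * cyc_val y"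
proof -
  have reduce: "(a0 * b0 - a1 * b3 - a2 * b2 - a3 * b1 - a3 * b3)
      + (a0 * b1 + a1 * b0 - a2 * b3 - a3 * b2) * z
      + (a0 * b2 + a1 * b1 + a2 * b0 + a1 * b3 + a2 * b2 + a3 * b1) * z^2
      + (a0 * b3 + a1 * b2 + a2 * b1 + a3 * b0 + a2 * b3 + a3 * b2) * z^3
    = (a0 + a1 * z + a2 * z^2 + a3 * z^3) * (b0 + b1 * z + b2 * z^2 + b3 * z^3)"
    if "z^4 = z^2 - 1" for z a0 a1 a2 a3 b0 b1 b2 b3 :: complex
    using that by algebra
  show ?thesis
    by (cases x; cases y) (simp add: reduce[OF zeta12_pow4])
qed

datatype gold = Gold cyc cyc

fun gold_val :: "gold \<Rightarrow> complex" where
  "gold_val (Gold x y) = cyc_val x + cyc_val y * golden"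

fun gold_add :: "gold \<Rightarrow> gold \<Rightarrow> gold" where
  "gold_add (Gold x y) (Gold x' y') = Gold (cyc_add x x') (cyc_add y y')"

fun gold_mul :: "gold \<Rightarrow> gold \<Rightarrow> gold" where
  "gold_mul (Gold x y) (Gold x' y') =
     Gold (cyc_add (cyc_mul x x') (cyc_mul y y'))
          (cyc_add (cyc_add (cyc_mul x y') (cyc_mul y x')) (cyc_mul y y'))"

lemma gold_val_add: "gold_val (gold_add x y) = gold_val x + gold_val y"
  by (cases x; cases y) (simp add: cyc_val_add algebra_simps)

lemma gold_val_mul: "gold_val (gold_mul x y) = gold_val x * gold_val y"
proof -
  have reduce: "(a * a' + b * b') + (a * b' + b * a' + b * b') * f = (a + b * f) * (a' + b' * f)"
    if "f^2 = f + 1" for f a b a' b' :: complex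
    using that by algebra
  show ?thesis
    by (cases x; cases y) (simp add: cyc_val_add cyc_val_mul reduce[OF golden_sq])
qed

definition gold_zero :: gold where
  "gold_zero = Gold (Cyc 0 0 0 0) (Cyc 0 0 0 0)"

definition gold_one :: gold where
  "gold_one = Gold (Cyc 1 0 0 0) (Cyc 0 0 0 0)"

fun gold_neg :: "gold \<Rightarrow> gold" where
  "gold_neg (Gold (Cyc a0 a1 a2 a3) (Cyc b0 b1 b2 b3)) =
     Gold (Cyc (- a0) (- a1) (- a2) (- a3)) (Cyc (- b0) (- b1) (- b2) (- b3))"

lemma gold_val_neg: "gold_val (gold_neg x) = - gold_val x"
  by (cases x rule: gold_neg.cases) (simp add: algebra_simps)

definition gold_dot3 :: "gold \<Rightarrow> gold \<Rightarrow> gold \<Rightarrow> gold \<Rightarrow> gold \<Rightarrow> gold \<Rightarrow> gold" where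
  "gold_dot3 a b c x y z = gold_add (gold_add (gold_mul a x) (gold_mul b y)) (gold_mul c z)"

datatype m3 = M3 gold gold gold gold gold gold gold gold gold

fun m3_val :: "m3 \<Rightarrow> cmat" where
  "m3_val (M3 a11 a12 a13 a21 a22 a23 a31 a32 a33) =
     vector [vector [gold_val a11, gold_val a12, gold_val a13],
             vector [gold_val a21, gold_val a22, gold_val a23],
             vector [gold_val a31, gold_val a32, gold_val a33]]"

fun m3_mul :: "m3 \<Rightarrow> m3 \<Rightarrow> m3" where
  "m3_mul (M3 a11 a12 a13 a21 a22 a23 a31 a32 a33) (M3 b11 b12 b13 b21 b22 b23 b31 b32 b33) =
     M3 (gold_dot3 a11 a12 a13 b11 b21 b31) (gold_dot3 a11 a12 a13 b12 b22 b32)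
        (gold_dot3 a11 a12 a13 b13 b23 b33)
        (gold_dot3 a21 a22 a23 b11 b21 b31) (gold_dot3 a21 a22 a23 b12 b22 b32)
        (gold_dot3 a21 a22 a23 b13 b23 b33)
        (gold_dot3 a31 a32 a33 b11 b21 b31) (gold_dot3 a31 a32 a33 b12 b22 b32)
        (gold_dot3 a31 a32 a33 b13 b23 b33)"

lemma m3_val_mul: "m3_val (m3_mul A B) = m3_val A ** m3_val B"
  by (cases A; cases B)
    (simp add: vec_eq_iff forall_3 matrix_matrix_mult_def sum_3 gold_dot3_def gold_val_add
      gold_val_mul)

definition m3_one :: m3 where
  "m3_one = M3 gold_one gold_zero gold_zero gold_zero gold_one gold_zero gold_zero gold_zero gold_one"

lemma m3_val_one: "m3_val m3_one = mat 1"
  by (simp add: m3_one_def gold_one_def gold_zero_def vec_eq_iff forall_3 mat_def)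

definition eta_vec :: cvec where
  "eta_vec = vector [1, eta, cnj eta]"

definition eta_twist :: "int \<Rightarrow> cmat \<Rightarrow> cmat" where
  "eta_twist e A = (\<chi> i j. eta powi e * cnj (eta_vec $ i) * A $ i $ j * eta_vec $ j)"

lemma eta_twist_mult: "eta_twist e A ** eta_twist f B = eta_twist (e + f) (A ** B)"
proof -
  have "eta \<noteq> 0"
    by (simp add: eta_def)
  then show ?thesis
    using eta_mult_cnj
    by (simp add: eta_twist_def eta_vec_def vec_eq_iff forall_3 matrix_matrix_mult_def sum_3
        power_int_add) algebra
qed

lemma eta_twist_R1m: "eta_twist 0 (R1m p t) = R1m p (eta * t)"
  using eta_mult_cnj
  by (simp add: eta_twist_def eta_vec_def R1m_def Let_def vec_eq_iff forall_3 mult_ac)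

definition tau5_gold :: gold where
  "tau5_gold = Gold (Cyc (-1) 0 1 0) (Cyc 1 0 0 0)"

definition tau5_cnj_gold :: gold where
  "tau5_cnj_gold = Gold (Cyc 0 0 (-1) 0) (Cyc 1 0 0 0)"

lemma gold_val_tau5_gold: "gold_val tau5_gold = tau5"
  by (simp add: tau5_gold_def tau5_eq)

lemma gold_val_tau5_cnj_gold: "gold_val tau5_cnj_gold = cnj tau5"
  by (simp add: tau5_cnj_gold_def cnj_tau5_eq)

definition uu_gold :: "nat \<Rightarrow> gold" where
  "uu_gold p = Gold (if p = 2 then Cyc 0 0 1 0 else Cyc 0 1 0 0) (Cyc 0 0 0 0)"

definition uu_cnj_gold :: "nat \<Rightarrow> gold" where
  "uu_cnj_gold p = Gold (if p = 2 then Cyc 1 0 (-1) 0 else Cyc 0 1 0 (-1)) (Cyc 0 0 0 0)"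

lemma
  assumes "p = 2 \<or> p = 4"
  shows gold_val_uu_gold: "gold_val (uu_gold p) = uu p"
    and gold_val_uu_cnj_gold: "gold_val (uu_cnj_gold p) = cnj (uu p)"
  using assms cnj_zeta12_sq cnj_zeta12
  by (auto simp: uu_gold_def uu_cnj_gold_def uu2_eq simp del: complex_cnj_power
      simp flip: zeta12_def)

definition R1_gold :: "nat \<Rightarrow> m3" where
  "R1_gold p = (let u = uu_gold p; v = uu_cnj_gold p in
     M3 (gold_mul u u) tau5_gold (gold_neg (gold_mul u tau5_cnj_gold))
        gold_zero v gold_zero
        gold_zero gold_zero v)"

definition R1_inv_gold :: "nat \<Rightarrow> m3" where
  "R1_inv_gold p = (let u = uu_gold p; v = uu_cnj_gold p in
     M3 (gold_mul v v) (gold_neg (gold_mul v tau5_gold)) tau5_cnj_gold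
        gold_zero u gold_zero
        gold_zero gold_zero u)"

definition J_gold :: m3 where
  "J_gold = M3 gold_zero gold_zero gold_one
              gold_one gold_zero gold_zero
              gold_zero (Gold (Cyc 0 0 1 0) (Cyc 0 0 0 0)) gold_zero"

definition J_inv_gold :: m3 where
  "J_inv_gold = M3 gold_zero gold_one gold_zero
                  gold_zero gold_zero (Gold (Cyc 1 0 (-1) 0) (Cyc 0 0 0 0))
                  gold_one gold_zero gold_zero"

lemma m3_val_R1_gold:
  assumes "p = 2 \<or> p = 4"
  shows "m3_val (R1_gold p) = R1m p tau5"
  using gold_val_uu_gold[OF assms] gold_val_uu_cnj_gold[OF assms]
  by (simp add: R1_gold_def R1m_def Let_def vec_eq_iff forall_3 gold_val_mul gold_val_neg
      gold_val_tau5_gold gold_val_tau5_cnj_gold gold_zero_def power2_eq_square)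

lemma eta_twist_J_gold: "eta_twist 1 (m3_val J_gold) = Jm"
proof -
  have "eta^3 * zeta12^2 = 1"
    using uu_mult_cnj[of 2] by (simp add: eta_cube uu2_eq mult.commute)
  then show ?thesis
    using eta_mult_cnj
    by (simp add: eta_twist_def eta_vec_def J_gold_def Jm_def gold_zero_def gold_one_def
        vec_eq_iff forall_3 power3_eq_cube mult_ac)
qed

type_synonym exact_mat = "int \<times> m3"

definition exact_val :: "exact_mat \<Rightarrow> cmat" where
  "exact_val x = eta_twist (fst x) (m3_val (snd x))"

definition exact_mul :: "exact_mat \<Rightarrow> exact_mat \<Rightarrow> exact_mat" where
  "exact_mul x y = (fst x + fst y, m3_mul (snd x) (snd y))"

lemma exact_val_mul: "exact_val (exact_mul x y) = exact_val x ** exact_val y"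
  by (simp add: exact_val_def exact_mul_def eta_twist_mult m3_val_mul)

lemma exact_val_one: "exact_val (0, m3_one) = mat 1"
  using eta_mult_cnj
  by (simp add: exact_val_def m3_val_one eta_twist_def eta_vec_def vec_eq_iff forall_3 mat_def
      mult.commute)

definition J_conj_exact :: "exact_mat \<Rightarrow> exact_mat" where
  "J_conj_exact x = exact_mul (1, J_gold) (exact_mul x (-1, J_inv_gold))"

fun letter_exact :: "nat \<Rightarrow> letter \<Rightarrow> exact_mat" where
  "letter_exact p LR1 = (0, R1_gold p)"
| "letter_exact p LR2 = J_conj_exact (0, R1_gold p)"
| "letter_exact p LR3 = J_conj_exact (J_conj_exact (0, R1_gold p))"
| "letter_exact p LJ = (1, J_gold)"
| "letter_exact p (Inv LR1) = (0, R1_inv_gold p)"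
| "letter_exact p (Inv LR2) = J_conj_exact (0, R1_inv_gold p)"
| "letter_exact p (Inv LR3) = J_conj_exact (J_conj_exact (0, R1_inv_gold p))"
| "letter_exact p (Inv LJ) = (-1, J_inv_gold)"
| "letter_exact p (Inv (Inv l)) = letter_exact p l"

lemma letter_exact_mul_inv:
  assumes "p = 2 \<or> p = 4" and "l \<in> {LR1, LR2, LR3, LJ}"
  shows "exact_mul (letter_exact p l) (letter_exact p (Inv l)) = (0, m3_one)"
proof -
  have "\<forall>p \<in> {2, 4}. \<forall>l \<in> {LR1, LR2, LR3, LJ}.
          exact_mul (letter_exact p l) (letter_exact p (Inv l)) = (0, m3_one)"
    by code_simp
  with assms show ?thesis
    by blast
qed

lemma letter_mat_exact_base:
  assumes p: "p = 2 \<or> p = 4" and l: "l \<in> {LR1, LR2, LR3, LJ}"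
  shows "letter_mat p sigma5 l = exact_val (letter_exact p l)"
proof -
  have R1: "exact_val (0, R1_gold p) = R1m p sigma5"
    by (simp add: exact_val_def m3_val_R1_gold[OF p] eta_twist_R1m sigma5_eq)
  have J: "exact_val (1, J_gold) = Jm"
    by (simp add: exact_val_def eta_twist_J_gold)
  have "Jm ** exact_val (-1, J_inv_gold) = exact_val (exact_mul (1, J_gold) (-1, J_inv_gold))"
    using J by (simp add: exact_val_mul)
  also have "\<dots> = mat 1"
    using letter_exact_mul_inv[OF p, of LJ] exact_val_one by simp
  finally have J_inv: "exact_val (-1, J_inv_gold) = matrix_inv Jm"
    by (simp add: matrix_inv_unique)
  show ?thesis
    using l R1 J J_inv by (auto simp: J_conj_exact_def exact_val_mul R2m_def R3m_def matrix_mul_assoc)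
qed

lemma letter_mat_exact_Inv:
  assumes p: "p = 2 \<or> p = 4" and l: "l \<in> {LR1, LR2, LR3, LJ}"
  shows "letter_mat p sigma5 (Inv l) = exact_val (letter_exact p (Inv l))"
proof -
  have "letter_mat p sigma5 l ** exact_val (letter_exact p (Inv l))
      = exact_val (exact_mul (letter_exact p l) (letter_exact p (Inv l)))"
    by (simp add: letter_mat_exact_base[OF p l] exact_val_mul)
  also have "\<dots> = mat 1"
    by (simp add: letter_exact_mul_inv[OF p l] exact_val_one)
  finally show ?thesis
    by (simp add: matrix_inv_unique)
qed

lemma letter_mat_exact: "p = 2 \<or> p = 4 \<Longrightarrow> letter_mat p sigma5 l = exact_val (letter_exact p l)"
proof (induction p l rule: letter_exact.induct)
  case (9 p l)
  have "letter_mat p sigma5 (Inv (Inv l)) = letter_mat p sigma5 l"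
    using matrix_inv_matrix_inv[OF Sgrp_invertible[OF letter_mat_in_Sgrp]] by simp
  with 9 show ?case
    by simp
qed (use letter_mat_exact_base letter_mat_exact_Inv in force)+

definition word_exact :: "nat \<Rightarrow> word \<Rightarrow> exact_mat" where
  "word_exact p w = foldr (\<lambda>l x. exact_mul (letter_exact p l) x) w (0, m3_one)"

lemma word_mat_exact:
  assumes "p = 2 \<or> p = 4"
  shows "word_mat p sigma5 w = exact_val (word_exact p w)"
  by (induction w)
    (simp_all add: word_exact_def exact_val_one exact_val_mul letter_mat_exact[OF assms])

lemma word_mat_commute_exact:
  assumes "p = 2 \<or> p = 4" and "word_exact p (f @ a) = word_exact p (a @ f)"
  shows "word_mat p sigma5 f ** word_mat p sigma5 a = word_mat p sigma5 a ** word_mat p sigma5 f"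
proof -
  have "word_mat p sigma5 (f @ a) = word_mat p sigma5 (a @ f)"
    using assms word_mat_exact by metis
  then show ?thesis
    by (simp add: word_mat_append)
qed

lemma stab_mirrors_gen_eq_Sgrp_exact:
  assumes p: "p = 2 \<or> p = 4"
    and factors: "\<forall>(f, a) \<in> set (fsR @ fsJ).
                    a \<in> {a1, a2} \<and> word_exact p (f @ a) = word_exact p (a @ f)"
    and R1: "word_exact p (concat (map fst fsR)) = word_exact p [LR1]"
    and J: "word_exact p (concat (map fst fsJ)) = word_exact p [LJ]"
  shows "stab_mirrors_gen p sigma5 a1 a2 = Sgrp p sigma5"
proof (rule stab_mirrors_gen_eq_Sgrp)
  show "\<forall>(f, a) \<in> set (fsR @ fsJ). a \<in> {a1, a2} \<and>
          word_mat p sigma5 f ** word_mat p sigma5 a = word_mat p sigma5 a ** word_mat p sigma5 f"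
    using factors word_mat_commute_exact[OF p] by fast
  show "word_mat p sigma5 (concat (map fst fsR)) = R1m p sigma5"
    using R1 word_mat_exact[OF p]
    by (metis letter_mat.simps(1) matrix_mul_rid word_mat_Cons word_mat_Nil)
  show "word_mat p sigma5 (concat (map fst fsJ)) = Jm"
    using J word_mat_exact[OF p]
    by (metis letter_mat.simps(4) matrix_mul_rid word_mat_Cons word_mat_Nil)
qed

section \<open>Factorisations of the generators\<close>

text \<open>In a factor list, a pair \<open>(f, a)\<close> records a word \<open>f\<close> commuting with the reflection
  \<open>a\<close>; the words \<open>f\<close> multiply to \<open>R1\<close> or to \<open>J\<close>.\<close>

definition conj_word :: "word \<Rightarrow> word \<Rightarrow> word" where
  "conj_word c w = c @ w @ word_inv c"

definition centraliser_R1_word :: word where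
  "centraliser_R1_word = [Inv LR3, Inv LR2, LR3, Inv LR1, Inv LR3, Inv LR2, LR3, Inv LR1, Inv LR3, LJ]"

definition A_word_1 :: word where
  "A_word_1 = power_word 5 [LR1, LR2, LR3, Inv LR2]"

definition A_word_2 :: word where
  "A_word_2 = power_word 5 [LR1, Inv LR3, LR2, LR3]"

definition A_word_3 :: word where
  "A_word_3 = power_word 5 [LR1, Inv LR2, Inv LR1, LR3, LR1, LR2]"

definition A_word_4 :: word where
  "A_word_4 = power_word 5 [LR1, LR3, LR1, LR2, Inv LR1, Inv LR3]"

definition J_factors_1 :: "(word \<times> word) list" where
  "J_factors_1 = (let E = conj_word [LR2] [LR3] in
     [(word_inv E, A_word_1), (centraliser_R1_word, [LR1]), (E, A_word_1), ([LR1], [LR1]),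
      (E, A_word_1), ([LR2, LR1, LR2], [LR1])])"

definition J_factors_2 :: "(word \<times> word) list" where
  "J_factors_2 = (let E = conj_word [Inv LR3] [LR2] in
     [([LR3, LR1, LR3], [LR1]), (E, A_word_2), ([LR1], [LR1]), (E, A_word_2),
      (centraliser_R1_word, [LR1]), (word_inv E, A_word_2)])"

definition J_factors_3 :: "(word \<times> word) list" where
  "J_factors_3 = (let E = conj_word [Inv LR2, Inv LR1] [LR3]; D = [LR2, LR1, LR2] in
     [(D, [LR1]), (word_inv E, A_word_3), (word_inv D, [LR1]), (centraliser_R1_word, [LR1]),
      (D, [LR1]), (E, A_word_3), ([LR1], [LR1]), (E, A_word_3)])"

definition J_factors_4 :: "(word \<times> word) list" where
  "J_factors_4 = (let E = conj_word [LR3, LR1] [LR2]; D = [LR3, LR1, LR3] in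
     [(E, A_word_4), ([LR1], [LR1]), (E, A_word_4), (D, [LR1]), (centraliser_R1_word, [LR1]),
      (word_inv D, [LR1]), (word_inv E, A_word_4), (D, [LR1])])"

lemma Sgrp4_generated:
  assumes "A \<in> {A_word_1, A_word_2, A_word_3, A_word_4}"
  shows "stab_mirrors_gen 4 sigma5 [LR1] A = Sgrp 4 sigma5"
proof -
  have "stab_mirrors_gen 4 sigma5 [LR1] A_word_1 = Sgrp 4 sigma5"
    by (rule stab_mirrors_gen_eq_Sgrp_exact[where fsR = "[([LR1], [LR1])]" and fsJ = J_factors_1];
        code_simp)
  moreover have "stab_mirrors_gen 4 sigma5 [LR1] A_word_2 = Sgrp 4 sigma5"
    by (rule stab_mirrors_gen_eq_Sgrp_exact[where fsR = "[([LR1], [LR1])]" and fsJ = J_factors_2];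
        code_simp)
  moreover have "stab_mirrors_gen 4 sigma5 [LR1] A_word_3 = Sgrp 4 sigma5"
    by (rule stab_mirrors_gen_eq_Sgrp_exact[where fsR = "[([LR1], [LR1])]" and fsJ = J_factors_3];
        code_simp)
  moreover have "stab_mirrors_gen 4 sigma5 [LR1] A_word_4 = Sgrp 4 sigma5"
    by (rule stab_mirrors_gen_eq_Sgrp_exact[where fsR = "[([LR1], [LR1])]" and fsJ = J_factors_4];
        code_simp)
  ultimately show ?thesis
    using assms by blast
qed

definition B_word :: word where
  "B_word = conj_word [LR2, Inv LR3, Inv LR2] [LR1]"

definition P5_word :: word where
  "P5_word = power_word 5 [LR1, LJ]"

definition R1_factors_p2 :: "(word \<times> word) list" where
  "R1_factors_p2 = (let C = [LR2, Inv LR3, Inv LR2]; P = [LR1, LJ];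
       X = conj_word C [LR2, LR1, LR2]; Y = conj_word C [LR3, LR1, LR3] in
     [(X, B_word), (P, P5_word), (P, P5_word), (Y, B_word), (word_inv P, P5_word),
      (word_inv P, P5_word), (B_word, B_word), (P, P5_word), (P, P5_word), (Y, B_word),
      (word_inv P, P5_word), (word_inv P, P5_word), (X, B_word)])"

definition factors_inv :: "(word \<times> word) list \<Rightarrow> (word \<times> word) list" where
  "factors_inv fs = rev (map (\<lambda>(f, a). (word_inv f, a)) fs)"

text \<open>\<open>J = R1\<^sup>-\<^sup>1 P\<close>, where \<open>R1\<^sup>-\<^sup>1\<close> is the product of the inverted factors of \<open>R1\<close>
  in reverse order.\<close>

lemma Sgrp2_generated: "stab_mirrors_gen 2 sigma5 P5_word B_word = Sgrp 2 sigma5"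
  by (rule stab_mirrors_gen_eq_Sgrp_exact[where fsR = R1_factors_p2
        and fsJ = "factors_inv R1_factors_p2 @ [([LR1, LJ], P5_word)]"]; code_simp)

theorem theorem11p2:
  shows "(let \<tau> = sigma5; H = Hmat 2 \<tau>; \<Gamma> = Sgrp 2 \<tau>;
              R1 = R1m 2 \<tau>; R2 = R2m 2 \<tau>; R3 = R3m 2 \<tau>;
              P = R1 ** Jm;
              B = R2 ** matrix_inv R3 ** matrix_inv R2 ** R1 ** R2 ** R3 ** matrix_inv R2
          in gen_grp (stab \<Gamma> (mirror H (mpow P 5)) \<union> stab \<Gamma> (mirror H B)) = \<Gamma>)
       \<and> (let \<tau> = sigma5; H = Hmat 4 \<tau>; \<Gamma> = Sgrp 4 \<tau>;
              R1 = R1m 4 \<tau>; R2 = R2m 4 \<tau>; R3 = R3m 4 \<tau>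
          in \<forall>A \<in> {mpow (R1 ** R2 ** R3 ** matrix_inv R2) 5,
                    mpow (R1 ** matrix_inv R3 ** R2 ** R3) 5,
                    mpow (R1 ** matrix_inv R2 ** matrix_inv R1 ** R3 ** R1 ** R2) 5,
                    mpow (R1 ** R3 ** R1 ** R2 ** matrix_inv R1 ** matrix_inv R3) 5}.
               gen_grp (stab \<Gamma> (mirror H R1) \<union> stab \<Gamma> (mirror H A)) = \<Gamma>)"
proof -
  have "\<forall>A \<in> {A_word_1, A_word_2, A_word_3, A_word_4}.
          stab_mirrors_gen 4 sigma5 [LR1] A = Sgrp 4 sigma5"
    using Sgrp4_generated by blast
  with Sgrp2_generated show ?thesis
    by (simp add: stab_mirrors_gen_def word_mat_power_word P5_word_def B_word_def A_word_1_def
        A_word_2_def A_word_3_def A_word_4_def conj_word_def word_inv_def matrix_mul_assoc)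
qed

end
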